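(* For every $A\in\mathbb R$, the kernel of the Mathieu–Hankel operator $\mathbf H(A)$ is trivial.
   Context: Fix $T>0$, $\omega=2\pi/T$. For $A\in\mathbb R$, $\mathbf H(A)$ is the bounded self-adjoint Hankel operator on $L^2(\mathbb R_+)$, $(\mathbf H(A)f)(t)=\int_0^\infty h_A(t+s)f(s)\,ds$, with $h_A(t)=p_A(\log t)/t$ and $p_A(\xi)=A+\operatorname{Re}\big(\Gamma(1-i\omega)e^{i\omega\xi}\big)$. *)

theory Defs
  imports "HOL-Analysis.Analysis"
begin

definition mh_omega :: "real \<Rightarrow> real" where
  "mh_omega T = 2 * pi / T"

definition mh_p :: "real \<Rightarrow> real \<Rightarrow> real \<Rightarrow> real" where
  "mh_p T A \<xi> = A + Re (Gamma (1 - \<i> * complex_of_real (mh_omega T))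
                         * exp (\<i> * complex_of_real (mh_omega T * \<xi>)))"

definition mh_h :: "real \<Rightarrow> real \<Rightarrow> real \<Rightarrow> real" where
  "mh_h T A t = mh_p T A (ln t) / t"

definition mh_hankel :: "real \<Rightarrow> real \<Rightarrow> (real \<Rightarrow> complex) \<Rightarrow> real \<Rightarrow> complex" where
  "mh_hankel T A f t = (LINT s:{0<..}|lborel. complex_of_real (mh_h T A (t + s)) * f s)"

definition L2_pos :: "(real \<Rightarrow> complex) \<Rightarrow> bool" where
  "L2_pos f \<longleftrightarrow> f \<in> borel_measurable lborel \<and>
     set_integrable lborel {0<..} (\<lambda>s. (cmod (f s))\<^sup>2)"

end

theory Submission
  imports Defs
begin

(* The kernel is itself a Laplace transform: since the Laplace transform of l powr (-i omega)
   at t is Gamma(1 - i omega) t powr (i omega - 1), h_A(t) = (L sigma)(t) with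
   sigma(l) = A + cos(omega ln l). By Fubini, H(A) f = L (sigma * L f) on (0, inf).
   If H(A) f = 0 a.e., uniqueness of the Laplace transform gives sigma * L f = 0 a.e.; the
   zeros of sigma form a countable set, so L f = 0 a.e., and uniqueness once more gives f = 0.
   Uniqueness itself comes from the Weierstrass theorem: the values at t = 1, 2, 3, ... are
   the moments of a finite measure in the variable exp(-s), and a vanishing Laplace
   transform a.e. vanishes everywhere by continuity from the right. *)

definition laplace :: "(real \<Rightarrow> 'a::{banach, second_countable_topology}) \<Rightarrow> real \<Rightarrow> 'a" where
  "laplace v t = (LINT s:{0<..}|lborel. exp (- t * s) *\<^sub>R v s)"

lemma laplace_cong:
  assumes "\<And>l. l > 0 \<Longrightarrow> v l = w l"
  shows "laplace v t = laplace w t"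
  using assms by (simp add: laplace_def set_lebesgue_integral_cong)

section \<open>Uniqueness of the Laplace transform\<close>

lemma integrable_scaleR_bounded_on_support:
  fixes w :: "'b \<Rightarrow> 'a::{banach, second_countable_topology}"
  assumes w: "integrable M w" and g: "g \<in> borel_measurable M"
    and bound: "\<And>x. w x \<noteq> 0 \<Longrightarrow> \<bar>g x\<bar> \<le> C"
  shows "integrable M (\<lambda>x. g x *\<^sub>R w x)"
proof (rule Bochner_Integration.integrable_bound)
  show "integrable M (\<lambda>x. C *\<^sub>R w x)"
    using w by simp
  show "(\<lambda>x. g x *\<^sub>R w x) \<in> borel_measurable M"
    using g w by measurable
  have "norm (g x *\<^sub>R w x) \<le> norm (C *\<^sub>R w x)" for x
    using bound[of x]
    by (cases "w x = 0") (auto intro: mult_right_mono order_trans[OF _ abs_ge_self])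
  then show "AE x in M. norm (g x *\<^sub>R w x) \<le> norm (C *\<^sub>R w x)"
    by simp
qed

lemma integral_zero_if_integral_atLeastAtMost_zero:
  fixes w :: "real \<Rightarrow> 'a::{banach, second_countable_topology}"
  assumes w: "integrable lborel w" and intervals: "\<And>a b. (LINT x:{a..b}|lborel. w x) = 0"
  shows "(\<integral>x. w x \<partial>lborel) = 0"
proof -
  have "(\<lambda>n. LINT x:{- real n..real n}|lborel. w x)
      \<longlonglongrightarrow> (LINT x:(\<Union>n. {- real n..real n})|lborel. w x)"
    using w unfolding set_integrable_def
    by (intro set_integral_cont_up)
      (auto simp: incseq_def set_integrable_def intro!: integrable_mult_indicator)
  moreover have "(\<Union>n. {- real n..real n}) = UNIV"
  proof -
    have "x \<in> (\<Union>n. {- real n..real n})" for x :: real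
      using real_arch_simple[of "\<bar>x\<bar>"] by (force simp: abs_le_iff)
    then show ?thesis by blast
  qed
  ultimately have "(LINT x:UNIV|lborel. w x) = 0"
    by (simp add: intervals LIMSEQ_const_iff)
  then show ?thesis
    by (simp add: set_lebesgue_integral_def)
qed

lemma AE_zero_if_integral_atLeastAtMost_zero:
  fixes w :: "real \<Rightarrow> 'a::{banach, second_countable_topology}"
  assumes w: "integrable lborel w" and intervals: "\<And>a b. (LINT x:{a..b}|lborel. w x) = 0"
  shows "AE x in lborel. w x = 0"
proof (rule sigma_finite_measure.density_zero[OF lborel.sigma_finite_measure_axioms w])
  have w_set: "set_integrable lborel A w" if "A \<in> sets borel" for A
    using w that unfolding set_integrable_def by (intro integrable_mult_indicator) auto
  note total = integral_zero_if_integral_atLeastAtMost_zero[OF w intervals]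
  fix A :: "real set" assume "A \<in> sets lborel"
  then have "A \<in> sets borel" by simp
  then show "(LINT x:A|lborel. w x) = 0"
  proof (induction rule: borel_set_induct)
    case empty
    show ?case by (simp add: set_lebesgue_integral_def)
  next
    case (interval a b)
    show ?case by (rule intervals)
  next
    case (compl A)
    have "(LINT x:-A|lborel. w x) = (\<integral>x. w x - indicator A x *\<^sub>R w x \<partial>lborel)"
      unfolding set_lebesgue_integral_def
      by (intro Bochner_Integration.integral_cong) (auto simp: indicator_def)
    also have "\<dots> = (\<integral>x. w x \<partial>lborel) - (LINT x:A|lborel. w x)"
      using compl w_set w unfolding set_lebesgue_integral_def set_integrable_def
      by (intro Bochner_Integration.integral_diff) auto
    finally show ?case using compl total by simp
  next
    case (union A)
    have "(LINT x:(\<Union>i. A i)|lborel. w x) = (\<Sum>i. LINT x:A i|lborel. w x)"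
      using union by (intro lebesgue_integral_countable_add w_set)
        (auto simp: disjoint_family_on_def)
    then show ?case using union by simp
  qed
qed

lemma integral_polynomial_exp_zero_if_exp_moments_zero:
  fixes w :: "real \<Rightarrow> 'a::{banach, second_countable_topology}"
  assumes w: "integrable lborel w" and w_neg: "\<And>x. x < 0 \<Longrightarrow> w x = 0"
    and moments: "\<And>k::nat. (\<integral>x. exp (-x) ^ k *\<^sub>R w x \<partial>lborel) = 0"
    and p: "real_polynomial_function p"
  shows "integrable lborel (\<lambda>x. p (exp (-x)) *\<^sub>R w x)"
    and "(\<integral>x. p (exp (-x)) *\<^sub>R w x \<partial>lborel) = 0"
proof -
  obtain a n where p_eq: "p = (\<lambda>y. \<Sum>i\<le>n. a i * y ^ i)"
    using p by (auto simp: real_polynomial_function_iff_sum)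
  have "\<bar>exp (-x) ^ k\<bar> \<le> 1" if "w x \<noteq> 0" for x k
  proof -
    have "x \<ge> 0"
      using w_neg[of x] that by linarith
    then show ?thesis
      by (simp add: power_le_one)
  qed
  then have "integrable lborel (\<lambda>x. exp (-x) ^ k *\<^sub>R w x)" for k
    by (intro integrable_scaleR_bounded_on_support[OF w]) auto
  then show "integrable lborel (\<lambda>x. p (exp (-x)) *\<^sub>R w x)"
    and "(\<integral>x. p (exp (-x)) *\<^sub>R w x \<partial>lborel) = 0"
    using moments
    by (simp_all add: p_eq scaleR_sum_left scaleR_scaleR[symmetric] del: scaleR_scaleR)
qed

lemma integral_comp_exp_zero_if_exp_moments_zero:
  fixes w :: "real \<Rightarrow> 'a::{banach, second_countable_topology}" and \<phi> :: "real \<Rightarrow> real"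
  assumes w: "integrable lborel w" and w_neg: "\<And>x. x < 0 \<Longrightarrow> w x = 0"
    and moments: "\<And>k::nat. (\<integral>x. exp (-x) ^ k *\<^sub>R w x \<partial>lborel) = 0"
    and \<phi>: "continuous_on UNIV \<phi>" and \<phi>_bound: "\<And>y. \<bar>\<phi> y\<bar> \<le> B"
  shows "(\<integral>x. \<phi> (exp (-x)) *\<^sub>R w x \<partial>lborel) = 0"
proof -
  have support: "x \<ge> 0" if "w x \<noteq> 0" for x
    using w_neg[of x] that by linarith
  have \<phi>_integrable: "integrable lborel (\<lambda>x. \<phi> (exp (-x)) *\<^sub>R w x)"
    by (rule integrable_scaleR_bounded_on_support[OF w, where C = B])
      (auto intro!: \<phi>_bound borel_measurable_continuous_onI continuous_on_compose2[OF \<phi>]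
        continuous_intros)
  define I where "I = (\<integral>x. \<phi> (exp (-x)) *\<^sub>R w x \<partial>lborel)"
  define C where "C = (\<integral>x. norm (w x) \<partial>lborel)"
  have "C \<ge> 0"
    by (simp add: C_def)
  have "norm I \<le> e" if "e > 0" for e
  proof -
    obtain p where p: "real_polynomial_function p"
      and approx: "\<And>y. y \<in> {0..1} \<Longrightarrow> \<bar>\<phi> y - p y\<bar> < e / (C + 1)"
      using Stone_Weierstrass_real_polynomial_function[of "{0..1}" \<phi> "e / (C + 1)"]
        \<phi> \<open>e > 0\<close> \<open>C \<ge> 0\<close>
      by (auto intro: continuous_on_subset)
    note p_integrable = integral_polynomial_exp_zero_if_exp_moments_zero(1)[OF w w_neg moments p]
    note p_integral = integral_polynomial_exp_zero_if_exp_moments_zero(2)[OF w w_neg moments p]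
    have "I = (\<integral>x. (\<phi> (exp (-x)) - p (exp (-x))) *\<^sub>R w x \<partial>lborel)"
      using \<phi>_integrable p_integrable p_integral by (simp add: I_def scaleR_diff_left)
    also have "norm \<dots> \<le> (\<integral>x. e / (C + 1) * norm (w x) \<partial>lborel)"
    proof (rule Bochner_Integration.integral_norm_bound_integral)
      show "integrable lborel (\<lambda>x. (\<phi> (exp (-x)) - p (exp (-x))) *\<^sub>R w x)"
        using \<phi>_integrable p_integrable by (simp add: scaleR_diff_left)
      show "norm ((\<phi> (exp (-x)) - p (exp (-x))) *\<^sub>R w x) \<le> e / (C + 1) * norm (w x)" for x
      proof (cases "w x = 0")
        case False
        then have "\<bar>\<phi> (exp (-x)) - p (exp (-x))\<bar> \<le> e / (C + 1)"
          using approx[of "exp (-x)"] support[of x] by simp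
        from mult_right_mono[OF this norm_ge_zero[of "w x"]] show ?thesis
          by simp
      qed simp
    qed (use w in simp)
    also have "\<dots> = e * (C / (C + 1))"
      by (simp add: C_def)
    also have "\<dots> \<le> e"
      using \<open>e > 0\<close> \<open>C \<ge> 0\<close> by (intro mult_left_le) simp_all
    finally show ?thesis .
  qed
  then have "norm I \<le> 0"
    by (metis add_0 field_le_epsilon)
  then show ?thesis
    by (simp add: I_def)
qed

lemma tendsto_tent_indicator:
  fixes a b y :: real
  shows "(\<lambda>k. max 0 (1 - real k * (max 0 (a - y) + max 0 (y - b)))) \<longlonglongrightarrow> indicator {a..b} y"
proof (cases "y \<in> {a..b}")
  case False
  define d where "d = max 0 (a - y) + max 0 (y - b)"
  have "d > 0" using False by (auto simp: d_def)
  obtain N :: nat where "1 / d < N" using reals_Archimedean2 by blast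
  have "max 0 (1 - real k * d) = 0" if "N \<le> k" for k
  proof -
    have "1 / d < real k" using \<open>1 / d < N\<close> that by linarith
    then show ?thesis using \<open>d > 0\<close> by (simp add: field_simps)
  qed
  then have "(\<lambda>k. max 0 (1 - real k * d)) \<longlonglongrightarrow> 0"
    by (intro tendsto_eventually) (auto simp: eventually_sequentially)
  then show ?thesis using False by (simp add: d_def)
qed simp

lemma AE_zero_if_exp_moments_zero:
  fixes w :: "real \<Rightarrow> 'a::{banach, second_countable_topology}"
  assumes w: "integrable lborel w" and w_neg: "\<And>x. x < 0 \<Longrightarrow> w x = 0"
    and moments: "\<And>k::nat. (\<integral>x. exp (-x) ^ k *\<^sub>R w x \<partial>lborel) = 0"
  shows "AE x in lborel. w x = 0"
proof (rule AE_zero_if_integral_atLeastAtMost_zero[OF w])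
  fix a b :: real
  define \<phi> where "\<phi> k y = max 0 (1 - real k * (max 0 (exp (-b) - y) + max 0 (y - exp (-a))))"
    for k :: nat and y :: real
  have \<phi>_bound: "\<bar>\<phi> k y\<bar> \<le> 1" for k y
    by (auto simp: \<phi>_def)
  have "(\<lambda>k. \<integral>x. \<phi> k (exp (-x)) *\<^sub>R w x \<partial>lborel) \<longlonglongrightarrow> (\<integral>x. indicator {a..b} x *\<^sub>R w x \<partial>lborel)"
  proof (rule integral_dominated_convergence[where w = "\<lambda>x. norm (w x)"])
    show "(\<lambda>x. \<phi> k (exp (-x)) *\<^sub>R w x) \<in> borel_measurable lborel" for k
      using w unfolding \<phi>_def by measurable
    show "AE x in lborel. (\<lambda>k. \<phi> k (exp (-x)) *\<^sub>R w x) \<longlonglongrightarrow> indicator {a..b} x *\<^sub>R w x"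
    proof (intro AE_I2 tendsto_scaleR tendsto_const)
      fix x :: real
      have "indicator {exp (-b)..exp (-a)} (exp (-x)) = (indicator {a..b} x :: real)"
        by (auto simp: indicator_def)
      then show "(\<lambda>k. \<phi> k (exp (-x))) \<longlonglongrightarrow> indicator {a..b} x"
        unfolding \<phi>_def by (metis tendsto_tent_indicator)
    qed
    show "AE x in lborel. norm (\<phi> k (exp (-x)) *\<^sub>R w x) \<le> norm (w x)" for k
      using \<phi>_bound by (intro AE_I2) (simp add: mult_left_le_one_le)
  qed (use w in auto)
  moreover have "(\<integral>x. \<phi> k (exp (-x)) *\<^sub>R w x \<partial>lborel) = 0" for k
    by (rule integral_comp_exp_zero_if_exp_moments_zero[OF w w_neg moments _ \<phi>_bound])
      (auto simp: \<phi>_def intro!: continuous_intros)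
  ultimately show "(LINT x:{a..b}|lborel. w x) = 0"
    by (simp add: set_lebesgue_integral_def LIMSEQ_const_iff)
qed

lemma AE_zero_if_laplace_zero_at_Suc:
  fixes v :: "real \<Rightarrow> 'a::{banach, second_countable_topology}"
  assumes integrable: "\<And>n::nat. set_integrable lborel {0<..} (\<lambda>s. exp (- real (Suc n) * s) *\<^sub>R v s)"
    and zero: "\<And>n::nat. laplace v (real (Suc n)) = 0"
  shows "AE s in lborel. s > 0 \<longrightarrow> v s = 0"
proof -
  define w where "w s = indicator {0<..} s *\<^sub>R exp (-s) *\<^sub>R v s" for s
  have w_moment: "exp (-s) ^ k *\<^sub>R w s = indicator {0<..} s *\<^sub>R exp (- real (Suc k) * s) *\<^sub>R v s"
    for k s
  proof -
    have "exp (-s) ^ k * exp (-s) = exp (- real (Suc k) * s)"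
      by (simp add: exp_of_nat_mult[symmetric] exp_add[symmetric] algebra_simps)
    then show ?thesis by (simp add: w_def mult.commute)
  qed
  have "AE s in lborel. w s = 0"
  proof (rule AE_zero_if_exp_moments_zero)
    show "integrable lborel w"
      using integrable[of 0] by (simp add: set_integrable_def w_def[abs_def])
    show "(\<integral>s. exp (-s) ^ k *\<^sub>R w s \<partial>lborel) = 0" for k
      using zero[of k] by (simp add: w_moment laplace_def set_lebesgue_integral_def)
  qed (simp add: w_def)
  then show ?thesis
    by eventually_elim (auto simp: w_def indicator_def)
qed

lemma exists_sequence_from_above_if_AE:
  assumes "AE t in lborel. P t"
  obtains u :: "nat \<Rightarrow> real" where "\<And>k. t\<^sub>0 < u k \<and> P (u k)" and "u \<longlonglongrightarrow> t\<^sub>0"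
proof -
  have "\<exists>t. t\<^sub>0 < t \<and> t < t\<^sub>0 + inverse (real (Suc k)) \<and> P t" for k
  proof (rule ccontr)
    define I where "I = {t\<^sub>0<..<t\<^sub>0 + inverse (real (Suc k))}"
    assume none: "\<nexists>t. t\<^sub>0 < t \<and> t < t\<^sub>0 + inverse (real (Suc k)) \<and> P t"
    have "AE t in lborel. t \<notin> I"
      using assms by eventually_elim (use none in \<open>auto simp: I_def\<close>)
    then have "I \<in> null_sets lborel"
      by (subst AE_iff_null_sets) (auto simp: I_def)
    then show False
      by (simp add: I_def null_sets_def)
  qed
  then obtain u where u: "\<And>k. t\<^sub>0 < u k \<and> u k < t\<^sub>0 + inverse (real (Suc k)) \<and> P (u k)"
    by metis
  have "u \<longlonglongrightarrow> t\<^sub>0"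
  proof (rule tendsto_sandwich[OF _ _ tendsto_const LIMSEQ_inverse_real_of_nat_add])
    show "\<forall>\<^sub>F k in sequentially. t\<^sub>0 \<le> u k"
      and "\<forall>\<^sub>F k in sequentially. u k \<le> t\<^sub>0 + inverse (real (Suc k))"
      using u by (auto intro: always_eventually less_imp_le)
  qed
  with u show ?thesis using that by blast
qed

lemma tendsto_laplace_from_above:
  fixes v :: "real \<Rightarrow> 'a::{banach, second_countable_topology}"
  assumes integrable: "set_integrable lborel {0<..} (\<lambda>s. exp (- t\<^sub>0 * s) *\<^sub>R v s)"
    and above: "\<And>k. t\<^sub>0 \<le> u k" and lim: "u \<longlonglongrightarrow> t\<^sub>0"
  shows "(\<lambda>k. laplace v (u k)) \<longlonglongrightarrow> laplace v t\<^sub>0"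
  unfolding laplace_def set_lebesgue_integral_def
proof (rule integral_dominated_convergence)
  let ?g = "\<lambda>s. indicator {0<..} s *\<^sub>R exp (- t\<^sub>0 * s) *\<^sub>R v s"
  show "integrable lborel (\<lambda>s. norm (?g s))"
    using integrable unfolding set_integrable_def by (rule integrable_norm)
  show g_measurable: "?g \<in> borel_measurable lborel"
    using integrable by (simp add: set_integrable_def)
  have rescale: "(\<lambda>s. indicator {0<..} s *\<^sub>R exp (- u k * s) *\<^sub>R v s)
      = (\<lambda>s. exp ((t\<^sub>0 - u k) * s) *\<^sub>R ?g s)" for k
    by (simp add: fun_eq_iff exp_diff exp_minus field_simps)
  show "(\<lambda>s. indicator {0<..} s *\<^sub>R exp (- u k * s) *\<^sub>R v s) \<in> borel_measurable lborel" for k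
    unfolding rescale using g_measurable by measurable
  show "AE s in lborel. (\<lambda>k. indicator {0<..} s *\<^sub>R exp (- u k * s) *\<^sub>R v s) \<longlonglongrightarrow> ?g s"
    using lim by (intro AE_I2 tendsto_intros)
  show "AE s in lborel. norm (indicator {0<..} s *\<^sub>R exp (- u k * s) *\<^sub>R v s) \<le> norm (?g s)" for k
  proof (intro AE_I2)
    fix s :: real
    have "exp (- u k * s) \<le> exp (- t\<^sub>0 * s)" if "s > 0"
      using above[of k] that by (simp add: mult_right_mono)
    then show "norm (indicator {0<..} s *\<^sub>R exp (- u k * s) *\<^sub>R v s) \<le> norm (?g s)"
      by (auto simp: indicator_def intro: mult_right_mono)
  qed
qed

lemma laplace_zero_if_AE_zero:
  fixes v :: "real \<Rightarrow> 'a::{banach, second_countable_topology}"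
  assumes integrable: "set_integrable lborel {0<..} (\<lambda>s. exp (- t\<^sub>0 * s) *\<^sub>R v s)"
    and AE_zero: "AE t in lborel. t > 0 \<longrightarrow> laplace v t = 0" and "t\<^sub>0 > 0"
  shows "laplace v t\<^sub>0 = 0"
proof -
  obtain u where u: "\<And>k. t\<^sub>0 < u k \<and> (u k > 0 \<longrightarrow> laplace v (u k) = 0)" and "u \<longlonglongrightarrow> t\<^sub>0"
    using exists_sequence_from_above_if_AE[OF AE_zero] by blast
  then have "(\<lambda>k. laplace v (u k)) \<longlonglongrightarrow> laplace v t\<^sub>0"
    by (intro tendsto_laplace_from_above[OF integrable]) (auto intro: less_imp_le)
  moreover have "laplace v (u k) = 0" for k
    using u[of k] \<open>t\<^sub>0 > 0\<close> by auto
  ultimately show ?thesis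
    by (simp add: LIMSEQ_const_iff)
qed

lemma AE_zero_if_laplace_AE_zero:
  fixes v :: "real \<Rightarrow> 'a::{banach, second_countable_topology}"
  assumes integrable: "\<And>c. c > 0 \<Longrightarrow> set_integrable lborel {0<..} (\<lambda>s. exp (- c * s) *\<^sub>R v s)"
    and AE_zero: "AE t in lborel. t > 0 \<longrightarrow> laplace v t = 0"
  shows "AE s in lborel. s > 0 \<longrightarrow> v s = 0"
proof (rule AE_zero_if_laplace_zero_at_Suc)
  show "set_integrable lborel {0<..} (\<lambda>s. exp (- real (Suc n) * s) *\<^sub>R v s)" for n
    by (rule integrable) simp
  show "laplace v (real (Suc n)) = 0" for n
    by (rule laplace_zero_if_AE_zero[OF integrable AE_zero]) simp_all
qed

section \<open>Laplace transforms of powers\<close>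

lemma Gamma_integral_lborel:
  fixes z :: complex
  assumes z: "Re z > 0"
  shows "set_integrable lborel {0<..} (\<lambda>t. of_real t powr (z - 1) / of_real (exp t))"
    and "(LINT t:{0<..}|lborel. of_real t powr (z - 1) / of_real (exp t)) = Gamma z"
proof -
  have measurable: "(\<lambda>t. indicator {0<..} t *\<^sub>R (of_real t powr (z - 1) / of_real (exp t)))
      \<in> borel_measurable lborel"
  proof -
    (* there is no measurability rule for complex powr; on (0, inf) it is exp of a multiple of ln *)
    have "(\<lambda>t. indicator {0<..} t *\<^sub>R (exp ((z - 1) * of_real (ln t)) / of_real (exp t)))
        \<in> borel_measurable lborel"
      by measurable
    then show ?thesis
      by (rule measurable_cong[THEN iffD1, rotated])
        (auto simp: powr_def Ln_of_real split: split_indicator)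
  qed
  have Gamma_integrable:
    "set_integrable lebesgue {0<..} (\<lambda>t. of_real t powr (z - 1) / of_real (exp t))"
    by (rule absolutely_integrable_Gamma_integral'[OF z])
  then show "set_integrable lborel {0<..} (\<lambda>t. of_real t powr (z - 1) / of_real (exp t))"
    using measurable by (simp add: set_integrable_def integrable_completion)
  have "(LINT t:{0<..}|lebesgue. of_real t powr (z - 1) / of_real (exp t)) = Gamma z"
    using set_lebesgue_integral_eq_integral(2)[OF Gamma_integrable]
      integral_unique[OF Gamma_integral_complex'[OF z]] by simp
  then show "(LINT t:{0<..}|lborel. of_real t powr (z - 1) / of_real (exp t)) = Gamma z"
    using measurable by (simp add: set_lebesgue_integral_def integral_completion)
qed

lemma laplace_powr:
  fixes z :: complex and a :: real
  assumes z: "Re z > 0" and a: "a > 0"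
  shows "set_integrable lborel {0<..} (\<lambda>l. exp (- a * l) *\<^sub>R of_real l powr (z - 1))"
    and "laplace (\<lambda>l. of_real l powr (z - 1)) a = Gamma z / of_real a powr z"
proof -
  define q where "q t = indicator {0<..} t *\<^sub>R (of_real t powr (z - 1) / of_real (exp t))"
    for t :: real
  define r where "r l = indicator {0<..} l *\<^sub>R (exp (- a * l) *\<^sub>R of_real l powr (z - 1))"
    for l :: real
  have q_integrable: "integrable lborel q" and q_integral: "(\<integral>t. q t \<partial>lborel) = Gamma z"
    using Gamma_integral_lborel[OF z]
    by (simp_all add: q_def[abs_def] set_integrable_def set_lebesgue_integral_def)
  have scale: "q (a * l) = of_real a powr (z - 1) * r l" for l
  proof (cases "l > 0")
    case True
    then have "of_real (a * l) powr (z - 1) = of_real a powr (z - 1) * of_real l powr (z - 1)"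
      using a by (simp add: powr_times_real)
    moreover have "exp (- a * l) = inverse (exp (a * l))"
      by (simp add: exp_minus)
    ultimately show ?thesis
      using True a by (simp add: q_def r_def scaleR_conv_of_real divide_inverse mult_ac)
  qed (use a in \<open>simp add: q_def r_def zero_less_mult_iff\<close>)
  have "integrable lborel (\<lambda>l. q (0 + a * l))"
    using q_integrable a by (subst lborel_integrable_real_affine_iff) auto
  then have "integrable lborel (\<lambda>l. inverse (of_real a powr (z - 1)) * q (a * l))"
    by (intro integrable_mult_right) simp
  moreover have "(\<lambda>l. inverse (of_real a powr (z - 1)) * q (a * l)) = r"
    using a by (simp add: fun_eq_iff scale)
  ultimately show "set_integrable lborel {0<..} (\<lambda>l. exp (- a * l) *\<^sub>R of_real l powr (z - 1))"
    by (simp add: set_integrable_def r_def[abs_def])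
  have "Gamma z = a *\<^sub>R (\<integral>l. q (a * l) \<partial>lborel)"
    using q_integral lborel_integral_real_affine[of a q 0] a by simp
  also have "\<dots> = of_real a powr z * (\<integral>l. r l \<partial>lborel)"
    using a by (simp add: scale scaleR_conv_of_real powr_add[of _ 1 "z - 1", simplified] mult.assoc)
  finally show "laplace (\<lambda>l. of_real l powr (z - 1)) a = Gamma z / of_real a powr z"
    using a by (simp add: laplace_def set_lebesgue_integral_def r_def[abs_def] field_simps)
qed

lemma laplace_one:
  fixes a :: real
  assumes a: "a > 0"
  shows "set_integrable lborel {0<..} (\<lambda>l. exp (- a * l))"
    and "laplace (\<lambda>_. 1) a = 1 / a"
proof -
  (* on (0, inf) the constant 1 is l powr (1 - 1), the case z = 1 of laplace_powr *)
  have powr_zero: "exp (- a * l) *\<^sub>R of_real l powr (1 - 1) = complex_of_real (exp (- a * l))"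
    if "l \<in> {0<..}" for l
    using that by (simp add: scaleR_conv_of_real)
  have "set_integrable lborel {0<..} (\<lambda>l. exp (- a * l) *\<^sub>R of_real l powr (1 - 1 :: complex))"
    by (rule laplace_powr(1)) (use a in simp_all)
  moreover have
    "set_integrable lborel {0<..} (\<lambda>l. exp (- a * l) *\<^sub>R of_real l powr (1 - 1 :: complex))
      = set_integrable lborel {0<..} (\<lambda>l. complex_of_real (exp (- a * l)))"
    by (rule set_integrable_cong) (simp_all add: scaleR_conv_of_real)
  ultimately have "set_integrable lborel {0<..} (\<lambda>l. complex_of_real (exp (- a * l)))"
    by simp
  then show "set_integrable lborel {0<..} (\<lambda>l. exp (- a * l))"
    by (simp add: set_integrable_def scaleR_conv_of_real complex_of_real_integrable_eq
        flip: of_real_mult)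
  have "complex_of_real (laplace (\<lambda>_. 1) a) = laplace (\<lambda>l. of_real l powr (1 - 1)) a"
    using powr_zero
    by (simp add: laplace_def set_integral_complex_of_real[symmetric] set_lebesgue_integral_cong)
  also have "\<dots> = 1 / a"
    using laplace_powr(2)[of 1 a] a by simp
  finally show "laplace (\<lambda>_. 1) a = 1 / a"
    by (metis of_real_1 of_real_divide of_real_eq_iff)
qed

lemma Re_laplace:
  assumes "set_integrable lborel {0<..} (\<lambda>s. exp (- t * s) *\<^sub>R v s)"
  shows "Re (laplace v t) = laplace (\<lambda>s. Re (v s)) t"
  using integral_Re[of lborel "\<lambda>s. indicator {0<..} s *\<^sub>R exp (- t * s) *\<^sub>R v s"] assms
  by (simp add: laplace_def set_lebesgue_integral_def set_integrable_def mult.assoc)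

lemma laplace_add_cos_ln:
  fixes A \<omega> a :: real
  assumes a: "a > 0"
  shows "laplace (\<lambda>l. A + cos (\<omega> * ln l)) a
    = (A + Re (Gamma (1 - \<i> * of_real \<omega>) * exp (\<i> * of_real (\<omega> * ln a)))) / a"
proof -
  define z where "z = 1 - \<i> * of_real \<omega>"
  define u\<^sub>0 where "u\<^sub>0 l = of_real l powr (1 - 1 :: complex)" for l :: real
  define u\<^sub>1 where "u\<^sub>1 l = of_real l powr (z - 1)" for l :: real
  have integrable: "set_integrable lborel {0<..} (\<lambda>l. exp (- a * l) *\<^sub>R u\<^sub>0 l)"
    "set_integrable lborel {0<..} (\<lambda>l. exp (- a * l) *\<^sub>R u\<^sub>1 l)"
    unfolding u\<^sub>0_def u\<^sub>1_def by (rule laplace_powr(1); use a in \<open>simp add: z_def\<close>)+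
  have integrable_sum: "set_integrable lborel {0<..} (\<lambda>l. exp (- a * l) *\<^sub>R (A *\<^sub>R u\<^sub>0 l + u\<^sub>1 l))"
    using integrable by (simp add: scaleR_add_right scaleR_left_commute[of _ A] del: scaleR_scaleR)
  have "laplace (\<lambda>l. A *\<^sub>R u\<^sub>0 l + u\<^sub>1 l) a = A *\<^sub>R laplace u\<^sub>0 a + laplace u\<^sub>1 a"
    using integrable
    by (simp add: laplace_def scaleR_add_right scaleR_left_commute[of _ A] del: scaleR_scaleR)
  also have "\<dots> = A / a + Gamma z * exp (\<i> * of_real (\<omega> * ln a)) / a"
  proof -
    have "laplace u\<^sub>0 a = 1 / a"
      using laplace_powr(2)[of 1 a] a by (simp add: u\<^sub>0_def[abs_def])
    moreover have "of_real a powr z = of_real a / exp (\<i> * of_real (\<omega> * ln a))"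
      using a by (simp add: z_def powr_def Ln_of_real exp_diff exp_of_real algebra_simps)
    then have "laplace u\<^sub>1 a = Gamma z * exp (\<i> * of_real (\<omega> * ln a)) / a"
      using laplace_powr(2)[of z a] a by (simp add: u\<^sub>1_def[abs_def] z_def)
    ultimately show ?thesis
      by (simp add: scaleR_conv_of_real)
  qed
  finally have laplace_complex: "laplace (\<lambda>l. A *\<^sub>R u\<^sub>0 l + u\<^sub>1 l) a = \<dots>" .
  have "laplace (\<lambda>l. A + cos (\<omega> * ln l)) a = laplace (\<lambda>l. Re (A *\<^sub>R u\<^sub>0 l + u\<^sub>1 l)) a"
    by (intro laplace_cong) (simp add: u\<^sub>0_def u\<^sub>1_def z_def powr_def Ln_of_real Re_exp)
  also have "\<dots> = Re (laplace (\<lambda>l. A *\<^sub>R u\<^sub>0 l + u\<^sub>1 l) a)"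
    by (rule Re_laplace[symmetric, OF integrable_sum])
  finally show ?thesis
    by (simp add: laplace_complex z_def add_divide_distrib)
qed

section \<open>The Hankel operator as a product of Laplace transforms\<close>

lemma set_integrable_inverse_square_shift:
  fixes t :: real
  assumes t: "t > 0"
  shows "set_integrable lborel {0<..} (\<lambda>s. 1 / (t + s)\<^sup>2)"
proof -
  have "(\<lambda>x. 1 / x ^ 2) integrable_on {t..}"
    using has_integral_inverse_power_to_inf[of 2 t] t by (auto simp: integrable_on_def)
  then have "set_integrable lebesgue {t..} (\<lambda>x. 1 / x\<^sup>2)"
    by (rule nonnegative_absolutely_integrable_1) simp
  then have "integrable lborel (\<lambda>x. indicator {t..} x * (1 / x\<^sup>2))"
    by (simp add: set_integrable_def integrable_completion)
  then have "integrable lborel (\<lambda>s. indicator {t..} (t + 1 * s) * (1 / (t + 1 * s)\<^sup>2))"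
    by (subst lborel_integrable_real_affine_iff) auto
  then have "set_integrable lborel {0..} (\<lambda>s. 1 / (t + s)\<^sup>2)"
    by (simp add: set_integrable_def indicator_def)
  then show ?thesis
    by (rule set_integrable_subset) auto
qed

lemma L2_pos_scaleR_integrable:
  fixes f :: "real \<Rightarrow> complex" and g :: "real \<Rightarrow> real"
  assumes f: "L2_pos f" and g: "g \<in> borel_measurable borel"
    and g_square: "set_integrable lborel {0<..} (\<lambda>s. (g s)\<^sup>2)"
  shows "set_integrable lborel {0<..} (\<lambda>s. g s *\<^sub>R f s)"
proof (rule set_integrable_bound)
  show "set_integrable lborel {0<..} (\<lambda>s. (g s)\<^sup>2 + (cmod (f s))\<^sup>2)"
    using g_square f by (simp add: L2_pos_def)
  have [measurable]: "f \<in> borel_measurable borel"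
    using f by (simp add: L2_pos_def)
  show "set_borel_measurable lborel {0<..} (\<lambda>s. g s *\<^sub>R f s)"
    using g unfolding set_borel_measurable_def by measurable
  show "AE s in lborel. s \<in> {0<..} \<longrightarrow> norm (g s *\<^sub>R f s) \<le> norm ((g s)\<^sup>2 + (cmod (f s))\<^sup>2)"
  proof (intro AE_I2 impI)
    fix s :: real
    have "2 * (\<bar>g s\<bar> * cmod (f s)) \<le> (g s)\<^sup>2 + (cmod (f s))\<^sup>2"
      using sum_squares_bound[of "\<bar>g s\<bar>" "cmod (f s)"] by simp
    moreover have "0 \<le> \<bar>g s\<bar> * cmod (f s)"
      by simp
    ultimately have "\<bar>g s\<bar> * cmod (f s) \<le> (g s)\<^sup>2 + (cmod (f s))\<^sup>2"
      by linarith
    then show "norm (g s *\<^sub>R f s) \<le> norm ((g s)\<^sup>2 + (cmod (f s))\<^sup>2)"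
      by simp
  qed
qed

lemma L2_pos_laplace_integrable:
  assumes f: "L2_pos f" and c: "c > 0"
  shows "set_integrable lborel {0<..} (\<lambda>s. exp (- c * s) *\<^sub>R f s)"
proof (rule L2_pos_scaleR_integrable[OF f])
  have "(exp (- c * s))\<^sup>2 = exp (- (2 * c) * s)" for s
    by (simp add: power2_eq_square flip: exp_add)
  then show "set_integrable lborel {0<..} (\<lambda>s. (exp (- c * s))\<^sup>2)"
    using laplace_one(1)[of "2 * c"] c by simp
qed simp

lemma L2_pos_inverse_shift_integrable:
  assumes f: "L2_pos f" and t: "t > 0"
  shows "set_integrable lborel {0<..} (\<lambda>s. (1 / (t + s)) *\<^sub>R f s)"
  using set_integrable_inverse_square_shift[OF t]
  by (intro L2_pos_scaleR_integrable[OF f]) (simp_all add: power_divide)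

lemma laplace_abs_le_if_bounded:
  fixes \<sigma> :: "real \<Rightarrow> real"
  assumes \<sigma>: "\<sigma> \<in> borel_measurable borel" and \<sigma>_bound: "\<And>l. \<bar>\<sigma> l\<bar> \<le> B" and c: "c > 0"
  shows "set_integrable lborel {0<..} (\<lambda>l. exp (- c * l) * \<sigma> l)"
    and "(LINT l:{0<..}|lborel. \<bar>exp (- c * l) * \<sigma> l\<bar>) \<le> B / c"
proof -
  have exp_integrable: "set_integrable lborel {0<..} (\<lambda>l. B * exp (- c * l))"
    using laplace_one(1)[OF c] by simp
  have le: "\<bar>exp (- c * l) * \<sigma> l\<bar> \<le> B * exp (- c * l)" for l
    using \<sigma>_bound[of l] by (simp add: abs_mult mult.commute)
  show integrable: "set_integrable lborel {0<..} (\<lambda>l. exp (- c * l) * \<sigma> l)"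
    using exp_integrable \<sigma> le
    by (intro set_integrable_bound[OF exp_integrable])
      (auto simp: set_borel_measurable_def intro: order_trans[OF _ abs_ge_self])
  have "(LINT l:{0<..}|lborel. \<bar>exp (- c * l) * \<sigma> l\<bar>) \<le> (LINT l:{0<..}|lborel. B * exp (- c * l))"
    using integrable exp_integrable le by (intro set_integral_mono set_integrable_abs)
  also have "\<dots> = B / c"
    using laplace_one(2)[OF c] by (simp add: laplace_def)
  finally show "(LINT l:{0<..}|lborel. \<bar>exp (- c * l) * \<sigma> l\<bar>) \<le> B / c" .
qed

lemma laplace_kernel_section:
  fixes \<sigma> :: "real \<Rightarrow> real" and x :: "'a::{banach, second_countable_topology}"
  assumes \<sigma>: "\<sigma> \<in> borel_measurable borel" and \<sigma>_bound: "\<And>l. \<bar>\<sigma> l\<bar> \<le> B" and c: "c > 0"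
  shows "integrable lborel (\<lambda>l. (indicator {0<..} l * exp (- c * l) * \<sigma> l) *\<^sub>R x)"
    and "(\<integral>l. norm ((indicator {0<..} l * exp (- c * l) * \<sigma> l) *\<^sub>R x) \<partial>lborel) \<le> B / c * norm x"
proof -
  note laplace_\<sigma> = laplace_abs_le_if_bounded[OF \<sigma> \<sigma>_bound c]
  show "integrable lborel (\<lambda>l. (indicator {0<..} l * exp (- c * l) * \<sigma> l) *\<^sub>R x)"
    using laplace_\<sigma>(1) by (simp add: set_integrable_def mult.assoc)
  have "(\<integral>l. norm ((indicator {0<..} l * exp (- c * l) * \<sigma> l) *\<^sub>R x) \<partial>lborel)
      = (LINT l:{0<..}|lborel. \<bar>exp (- c * l) * \<sigma> l\<bar>) * norm x"
  proof -
    have "norm ((indicator {0<..} l * exp (- c * l) * \<sigma> l) *\<^sub>R x)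
        = indicator {0<..} l *\<^sub>R \<bar>exp (- c * l) * \<sigma> l\<bar> * norm x" for l
      by (simp add: abs_mult)
    then show ?thesis
      by (simp only: set_lebesgue_integral_def integral_mult_left_zero)
  qed
  also have "\<dots> \<le> B / c * norm x"
    using laplace_\<sigma>(2) by (rule mult_right_mono) simp
  finally show
    "(\<integral>l. norm ((indicator {0<..} l * exp (- c * l) * \<sigma> l) *\<^sub>R x) \<partial>lborel) \<le> B / c * norm x" .
qed

lemma integrable_laplace_kernel:
  fixes \<sigma> :: "real \<Rightarrow> real" and f :: "real \<Rightarrow> complex"
  assumes f: "L2_pos f" and \<sigma>: "\<sigma> \<in> borel_measurable borel" and \<sigma>_bound: "\<And>l. \<bar>\<sigma> l\<bar> \<le> B"
    and t: "t > 0"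
  shows "integrable (lborel \<Otimes>\<^sub>M lborel)
    (\<lambda>(s, l). (indicator {0<..} s * indicator {0<..} l * exp (- (t + s) * l) * \<sigma> l) *\<^sub>R f s)"
    (is "integrable _ (\<lambda>(s, l). ?K s l)")
proof -
  have [measurable]: "f \<in> borel_measurable borel"
    using f by (simp add: L2_pos_def)
  have K_measurable: "(\<lambda>(s, l). ?K s l) \<in> borel_measurable (lborel \<Otimes>\<^sub>M lborel)"
    using \<sigma> by measurable
  note slice = laplace_kernel_section[OF \<sigma> \<sigma>_bound, of "t + s" "f s" for s]
  have K_section:
    "?K s l = indicator {0<..} s *\<^sub>R (indicator {0<..} l * exp (- (t + s) * l) * \<sigma> l) *\<^sub>R f s"
    for s l
    by (simp add: mult_ac)
  have section_integrable: "integrable lborel (\<lambda>l. ?K s l)" for s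
    using slice(1)[of s] t by (cases "s > 0") (simp_all add: K_section)
  have section_norm:
    "(\<integral>l. norm (?K s l) \<partial>lborel) \<le> norm ((indicator {0<..} s * (B / (t + s))) *\<^sub>R f s)"
    for s
    using slice(2)[of s] t \<sigma>_bound[of 0]
    by (cases "s > 0") (simp_all add: K_section mult_ac)
  (* |f(s)| / (t + s) is integrable on (0, inf) as a product of two square integrable functions *)
  have "integrable lborel (\<lambda>s. B *\<^sub>R (indicator {0<..} s *\<^sub>R (1 / (t + s)) *\<^sub>R f s))"
    using L2_pos_inverse_shift_integrable[OF f t] unfolding set_integrable_def
    by (rule integrable_scaleR_right)
  then have "integrable lborel (\<lambda>s. (indicator {0<..} s * (B / (t + s))) *\<^sub>R f s)"
    by (simp add: mult_ac)
  then have "integrable lborel (\<lambda>s. \<integral>l. norm (?K s l) \<partial>lborel)"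
    by (rule Bochner_Integration.integrable_bound) (use \<sigma> section_norm in \<open>auto intro!: AE_I2\<close>)
  moreover have "AE s in lborel. integrable lborel (\<lambda>l. ?K s l)"
    using section_integrable by simp
  ultimately show ?thesis
  proof (intro lborel_pair.Fubini_integrable[OF K_measurable])
  qed simp_all
qed

lemma laplace_scaleR_laplace:
  fixes \<sigma> :: "real \<Rightarrow> real" and f :: "real \<Rightarrow> complex"
  assumes f: "L2_pos f" and \<sigma>: "\<sigma> \<in> borel_measurable borel" and \<sigma>_bound: "\<And>l. \<bar>\<sigma> l\<bar> \<le> B"
    and t: "t > 0"
  shows "set_integrable lborel {0<..} (\<lambda>l. exp (- t * l) *\<^sub>R \<sigma> l *\<^sub>R laplace f l)"
    and "laplace (\<lambda>l. \<sigma> l *\<^sub>R laplace f l) t = (LINT s:{0<..}|lborel. laplace \<sigma> (t + s) *\<^sub>R f s)"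
proof -
  define K where
    "K s l = (indicator {0<..} s * indicator {0<..} l * exp (- (t + s) * l) * \<sigma> l) *\<^sub>R f s"
    for s l
  have K_integrable: "integrable (lborel \<Otimes>\<^sub>M lborel) (\<lambda>(s, l). K s l)"
    unfolding K_def by (rule integrable_laplace_kernel[OF f \<sigma> \<sigma>_bound t])
  have K_integral_l: "(\<integral>l. K s l \<partial>lborel) = indicator {0<..} s *\<^sub>R laplace \<sigma> (t + s) *\<^sub>R f s" for s
  proof -
    have "(\<integral>l. K s l \<partial>lborel) = (\<integral>l. complex_of_real
        (indicator {0<..} s * (indicator {0<..} l * (exp (- (t + s) * l) * \<sigma> l))) * f s \<partial>lborel)"
      by (simp add: K_def scaleR_conv_of_real mult_ac)
    also have "\<dots> = complex_of_real
        (\<integral>l. indicator {0<..} s * (indicator {0<..} l * (exp (- (t + s) * l) * \<sigma> l)) \<partial>lborel) * f s"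
      by (simp only: integral_mult_left_zero integral_complex_of_real)
    finally show ?thesis
      by (simp add: laplace_def set_lebesgue_integral_def scaleR_conv_of_real)
  qed
  have K_integral_s:
    "(\<integral>s. K s l \<partial>lborel) = indicator {0<..} l *\<^sub>R exp (- t * l) *\<^sub>R \<sigma> l *\<^sub>R laplace f l"
    for l
  proof -
    have "(\<lambda>s. K s l)
        = (\<lambda>s. (indicator {0<..} l * exp (- t * l) * \<sigma> l) *\<^sub>R
            (indicator {0<..} s *\<^sub>R exp (- l * s) *\<^sub>R f s))"
      by (simp add: fun_eq_iff K_def mult_exp_exp algebra_simps)
    then have "(\<integral>s. K s l \<partial>lborel) = (indicator {0<..} l * exp (- t * l) * \<sigma> l) *\<^sub>R laplace f l"
      by (simp only: laplace_def set_lebesgue_integral_def integral_scaleR_right)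
    then show ?thesis
      by simp
  qed
  show "set_integrable lborel {0<..} (\<lambda>l. exp (- t * l) *\<^sub>R \<sigma> l *\<^sub>R laplace f l)"
    using lborel_pair.integrable_snd[OF K_integrable] by (simp add: K_integral_s set_integrable_def)
  have "laplace (\<lambda>l. \<sigma> l *\<^sub>R laplace f l) t = (\<integral>l. \<integral>s. K s l \<partial>lborel \<partial>lborel)"
    by (simp add: K_integral_s laplace_def set_lebesgue_integral_def)
  also have "\<dots> = (\<integral>s. \<integral>l. K s l \<partial>lborel \<partial>lborel)"
    by (rule lborel_pair.Fubini_integral[OF K_integrable])
  also have "\<dots> = (LINT s:{0<..}|lborel. laplace \<sigma> (t + s) *\<^sub>R f s)"
    by (simp add: K_integral_l set_lebesgue_integral_def)
  finally show
    "laplace (\<lambda>l. \<sigma> l *\<^sub>R laplace f l) t = (LINT s:{0<..}|lborel. laplace \<sigma> (t + s) *\<^sub>R f s)" .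
qed

section \<open>Zeros of A + cos (\<omega> ln l)\<close>

lemma countable_cos_eq: "countable {y. cos y = (c :: real)}"
proof -
  define g :: "int \<times> bool \<Rightarrow> real"
    where "g = (\<lambda>(n, b). (if b then arccos c else - arccos c) + 2 * of_int n * pi)"
  have "{y. cos y = c} \<subseteq> range g"
  proof
    fix y assume "y \<in> {y. cos y = c}"
    then have "cos y = cos (arccos c)"
      using cos_arccos cos_ge_minus_one cos_le_one by force
    then obtain n where "n \<in> \<int>" and n: "y = arccos c + 2 * n * pi \<or> y = - arccos c + 2 * n * pi"
      by (auto simp: cos_eq)
    then obtain m where "n = of_int m" by (auto elim: Ints_cases)
    with n show "y \<in> range g"
      by (auto simp: g_def intro: image_eqI[where x = "(m, True)"] image_eqI[where x = "(m, False)"])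
  qed
  then show ?thesis by (rule countable_subset) simp
qed

lemma AE_add_cos_mult_ln_nonzero:
  fixes a \<omega> :: real
  assumes "\<omega> \<noteq> 0"
  shows "AE x in lborel. x > 0 \<longrightarrow> a + cos (\<omega> * ln x) \<noteq> 0"
proof -
  have "{x. x > 0 \<and> a + cos (\<omega> * ln x) = 0} \<subseteq> (\<lambda>y. exp (y / \<omega>)) ` {y. cos y = - a}"
  proof
    fix x assume x: "x \<in> {x. x > 0 \<and> a + cos (\<omega> * ln x) = 0}"
    then have "x = exp (\<omega> * ln x / \<omega>)" using assms by simp
    moreover have "cos (\<omega> * ln x) = - a" using x by simp
    ultimately show "x \<in> (\<lambda>y. exp (y / \<omega>)) ` {y. cos y = - a}" by blast
  qed
  then have "countable {x. x > 0 \<and> a + cos (\<omega> * ln x) = 0}"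
    using countable_cos_eq by (blast intro: countable_subset)
  then have "AE x in lborel. x \<notin> {x. x > 0 \<and> a + cos (\<omega> * ln x) = 0}"
    by (intro AE_not_in countable_imp_null_set_lborel)
  then show ?thesis by eventually_elim auto
qed

lemma mh_h_eq_laplace:
  assumes "a > 0"
  shows "mh_h T A a = laplace (\<lambda>l. A + cos (mh_omega T * ln l)) a"
  using laplace_add_cos_ln[OF assms, of A "mh_omega T"] by (simp add: mh_h_def mh_p_def)

lemma mh_hankel_eq_laplace:
  fixes T A :: real and f :: "real \<Rightarrow> complex"
  assumes f: "L2_pos f" and t: "t > 0"
  defines "\<sigma> \<equiv> \<lambda>l. A + cos (mh_omega T * ln l)"
  shows "set_integrable lborel {0<..} (\<lambda>l. exp (- t * l) *\<^sub>R \<sigma> l *\<^sub>R laplace f l)"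
    and "mh_hankel T A f t = laplace (\<lambda>l. \<sigma> l *\<^sub>R laplace f l) t"
proof -
  have \<sigma>_measurable: "\<sigma> \<in> borel_measurable borel"
    unfolding \<sigma>_def by measurable
  have \<sigma>_bound: "\<bar>\<sigma> l\<bar> \<le> \<bar>A\<bar> + 1" for l
    unfolding \<sigma>_def
    using abs_triangle_ineq[of A "cos (mh_omega T * ln l)"] abs_cos_le_one[of "mh_omega T * ln l"]
    by linarith
  note laplace_\<sigma> = laplace_scaleR_laplace[OF f \<sigma>_measurable \<sigma>_bound t]
  show "set_integrable lborel {0<..} (\<lambda>l. exp (- t * l) *\<^sub>R \<sigma> l *\<^sub>R laplace f l)"
    by (rule laplace_\<sigma>(1))
  have "mh_hankel T A f t = (LINT s:{0<..}|lborel. laplace \<sigma> (t + s) *\<^sub>R f s)"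
    unfolding mh_hankel_def using t
    by (intro set_lebesgue_integral_cong) (simp_all add: mh_h_eq_laplace \<sigma>_def scaleR_conv_of_real)
  then show "mh_hankel T A f t = laplace (\<lambda>l. \<sigma> l *\<^sub>R laplace f l) t"
    using laplace_\<sigma>(2) by simp
qed

theorem theorem8p9:
  fixes T A :: real and f :: "real \<Rightarrow> complex"
  assumes "T > 0"
    and "L2_pos f"
    and "AE t in lborel. t > 0 \<longrightarrow> mh_hankel T A f t = 0"
  shows "AE t in lborel. t > 0 \<longrightarrow> f t = 0"
proof -
  let ?\<sigma> = "\<lambda>l. A + cos (mh_omega T * ln l)"
  have "AE l in lborel. l > 0 \<longrightarrow> ?\<sigma> l *\<^sub>R laplace f l = 0"
  proof (rule AE_zero_if_laplace_AE_zero)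
    show "set_integrable lborel {0<..} (\<lambda>l. exp (- c * l) *\<^sub>R ?\<sigma> l *\<^sub>R laplace f l)"
      if "c > 0" for c
      by (rule mh_hankel_eq_laplace(1)[OF assms(2) that])
    show "AE t in lborel. t > 0 \<longrightarrow> laplace (\<lambda>l. ?\<sigma> l *\<^sub>R laplace f l) t = 0"
      using assms(3) by eventually_elim (simp add: mh_hankel_eq_laplace(2)[OF assms(2)])
  qed
  moreover have "AE l in lborel. l > 0 \<longrightarrow> ?\<sigma> l \<noteq> 0"
    using AE_add_cos_mult_ln_nonzero[of "mh_omega T" A] assms(1) by (simp add: mh_omega_def)
  ultimately have "AE l in lborel. l > 0 \<longrightarrow> laplace f l = 0"
    by eventually_elim simp
  with L2_pos_laplace_integrable[OF assms(2)] show ?thesis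
    by (rule AE_zero_if_laplace_AE_zero)
qed

end
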